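(* The following are equivalent for any structures $\mathcal{M}$ and $\mathcal{N}$. (1) $\mathcal{N}$ locally trace defines $\mathcal{M}$. (2) For every $k\ge 2$, every $\mathcal{M}$-definable $k$-hypergraph embeds into an $\mathcal{N}$-definable $k$-hypergraph. (3) For every $k\ge 2$, every $k$-hypergraph that is zero-definable in $\mathcal{M}$ embeds into a $k$-hypergraph that is zero-definable in $\mathcal{N}$.
   Context: "Definable" means first-order definable with parameters; "zero-definable" means definable without parameters. A $k$-hypergraph is a set with a symmetric $k$-ary relation $E$ such that $E(a_1,\dots,a_k)$ implies the $a_i$ are distinct. An $\mathcal{M}$-definable $k$-hypergraph is one whose vertex set is an $\mathcal{M}$-definable set (a definable subset of some $M^d$) and whose relation is $\mathcal{M}$-definable; embeddings are injective maps preserving and reflecting the relation. $\mathcal{N}$ locally trace defines $\mathcal{M}$ if there is a possibly infinite collection $\mathcal{E}$ of functions $M\to N$ such that every $\mathcal{M}$-definable subset of every $M^m$ is of the form $\{(a_1,\dots,a_m) : (f_1(a_{i_1}),\dots,f_n(a_{i_n}))\in Y\}$ for some $f_1,\dots,f_n\in\mathcal{E}$, $i_1,\dots,i_n\in\{1,\dots,m\}$ and $\mathcal{N}$-definable $Y\subseteq N^n$. *)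

theory Defs
  imports Main "HOL-Library.Multiset"
begin

text \<open>A structure on the universe UNIV :: 'a is given by an interpretation
  R :: 'r => 'a list => bool of its (relation) symbols: R r xs says the
  tuple xs lies in the relation named r (of arity length xs).  Function and
  constant symbols are replaced by their graphs, which does not change the
  definable (or zero-definable) sets.\<close>

datatype 'r fm =
    Eq nat nat
  | Rel 'r "nat list"
  | Neg "'r fm"
  | Conj "'r fm" "'r fm"
  | Ex "'r fm"

text \<open>Satisfaction; variables are de Bruijn indices into the environment list;
  atoms mentioning an out-of-range variable are false.\<close>

fun sat :: "('r \<Rightarrow> 'a list \<Rightarrow> bool) \<Rightarrow> 'a list \<Rightarrow> 'r fm \<Rightarrow> bool" where
  "sat R e (Eq i j) = (i < length e \<and> j < length e \<and> e ! i = e ! j)"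
| "sat R e (Rel r is) = ((\<forall>i\<in>set is. i < length e) \<and> R r (map (\<lambda>i. e ! i) is))"
| "sat R e (Neg \<phi>) = (\<not> sat R e \<phi>)"
| "sat R e (Conj \<phi> \<psi>) = (sat R e \<phi> \<and> sat R e \<psi>)"
| "sat R e (Ex \<phi>) = (\<exists>x. sat R (x # e) \<phi>)"

definition definable :: "('r \<Rightarrow> 'a list \<Rightarrow> bool) \<Rightarrow> nat \<Rightarrow> 'a list set \<Rightarrow> bool" where
  "definable R m X \<longleftrightarrow>
     (\<exists>\<phi> (b :: 'a list). X = {xs. length xs = m \<and> sat R (xs @ b) \<phi>})"

definition zero_definable :: "('r \<Rightarrow> 'a list \<Rightarrow> bool) \<Rightarrow> nat \<Rightarrow> 'a list set \<Rightarrow> bool" where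
  "zero_definable R m X \<longleftrightarrow>
     (\<exists>\<phi>. X = {xs. length xs = m \<and> sat R xs \<phi>})"

definition hypergraph :: "nat \<Rightarrow> 'v set \<Rightarrow> 'v list set \<Rightarrow> bool" where
  "hypergraph k V E \<longleftrightarrow>
     (\<forall>vs\<in>E. length vs = k \<and> set vs \<subseteq> V \<and> distinct vs) \<and>
     (\<forall>vs ws. length vs = k \<longrightarrow> set vs \<subseteq> V \<longrightarrow> mset vs = mset ws \<longrightarrow>
        (vs \<in> E \<longleftrightarrow> ws \<in> E))"

text \<open>Definable k-hypergraph: vertex set a definable subset of M^d, and
  the k-ary relation a definable subset of (M^d)^k = M^(d*k).\<close>
definition def_hypergraph ::
  "('r \<Rightarrow> 'a list \<Rightarrow> bool) \<Rightarrow> nat \<Rightarrow> nat \<Rightarrow> 'a list set \<Rightarrow> 'a list list set \<Rightarrow> bool" where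
  "def_hypergraph R k d V E \<longleftrightarrow>
     hypergraph k V E \<and> V \<subseteq> {xs. length xs = d} \<and>
     definable R d V \<and> definable R (d * k) (concat ` E)"

definition zero_def_hypergraph ::
  "('r \<Rightarrow> 'a list \<Rightarrow> bool) \<Rightarrow> nat \<Rightarrow> nat \<Rightarrow> 'a list set \<Rightarrow> 'a list list set \<Rightarrow> bool" where
  "zero_def_hypergraph R k d V E \<longleftrightarrow>
     hypergraph k V E \<and> V \<subseteq> {xs. length xs = d} \<and>
     zero_definable R d V \<and> zero_definable R (d * k) (concat ` E)"

definition hg_embedding :: "nat \<Rightarrow> ('v \<Rightarrow> 'w) \<Rightarrow> 'v set \<Rightarrow> 'v list set \<Rightarrow> 'w set \<Rightarrow> 'w list set \<Rightarrow> bool" where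
  "hg_embedding k f V E W F \<longleftrightarrow>
     f ` V \<subseteq> W \<and> inj_on f V \<and>
     (\<forall>vs. length vs = k \<longrightarrow> set vs \<subseteq> V \<longrightarrow> (vs \<in> E \<longleftrightarrow> map f vs \<in> F))"

definition locally_trace_defines ::
  "('s \<Rightarrow> 'b list \<Rightarrow> bool) \<Rightarrow> ('r \<Rightarrow> 'a list \<Rightarrow> bool) \<Rightarrow> bool" where
  "locally_trace_defines RN RM \<longleftrightarrow>
     (\<exists>\<E> :: ('a \<Rightarrow> 'b) set. \<forall>m X. definable RM m X \<longrightarrow>
        (\<exists>fs idx Y. length idx = length fs \<and> set fs \<subseteq> \<E> \<and> (\<forall>i\<in>set idx. i < m) \<and>
           definable RN (length fs) Y \<and>
           X = {as. length as = m \<and> map2 (\<lambda>f i. f (as ! i)) fs idx \<in> Y}))"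

end

theory Submission
  imports Defs "HOL-Combinatorics.Permutations"
begin

text \<open>
  The trace of \<open>E\<close> is read off finitely many functions
  and an \<open>\<N>\<close>-formula with parameters \<open>c\<close>, and the trace of equality on \<open>M\<close> yields
  finitely many functions separating points. Sending a vertex \<open>v\<close> to the list of all
  values \<open>g (v ! t)\<close> of these functions, followed by \<open>c\<close>, is injective; since every code
  word carries the parameters, the symmetrised image of \<open>E\<close> is zero-definable in \<open>\<N>\<close>.

  Conversely, let \<open>X \<subseteq> M\<^sup>m\<close> be defined by \<open>\<phi>(x, c)\<close> and put \<open>K = m + 1\<close>. In a suitable
  zero-definable \<open>K\<close>-hypergraph a vertex carries a point, a sort \<open>i < K\<close> encoded by an
  equality pattern, and a parameter tuple; an edge consists of one vertex of each sort,
  all with the same parameters, whose points and parameters satisfy \<open>\<phi>\<close>. So \<open>X\<close> is the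
  preimage of the edge relation under a coordinatewise map, and composing with an
  embedding into an \<open>\<N>\<close>-definable hypergraph exhibits \<open>X\<close> as a local trace.
\<close>

section \<open>Zero-definable predicates on tuples\<close>

definition zero_definable_pred :: "('r \<Rightarrow> 'a list \<Rightarrow> bool) \<Rightarrow> nat \<Rightarrow> ('a list \<Rightarrow> bool) \<Rightarrow> bool" where
  "zero_definable_pred R m P \<longleftrightarrow> (\<exists>\<phi>. \<forall>xs. length xs = m \<longrightarrow> (P xs \<longleftrightarrow> sat R xs \<phi>))"

lemma zero_definable_pred_iff_zero_definable:
  "zero_definable_pred R m P \<longleftrightarrow> zero_definable R m {xs. length xs = m \<and> P xs}"
proof
  assume "zero_definable_pred R m P"
  then obtain \<phi> where "\<forall>xs. length xs = m \<longrightarrow> (P xs \<longleftrightarrow> sat R xs \<phi>)"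
    unfolding zero_definable_pred_def by blast
  then have "{xs. length xs = m \<and> P xs} = {xs. length xs = m \<and> sat R xs \<phi>}" by blast
  then show "zero_definable R m {xs. length xs = m \<and> P xs}" unfolding zero_definable_def by blast
next
  assume "zero_definable R m {xs. length xs = m \<and> P xs}"
  then obtain \<phi> where "{xs. length xs = m \<and> P xs} = {xs. length xs = m \<and> sat R xs \<phi>}"
    unfolding zero_definable_def by blast
  then have "\<forall>xs. length xs = m \<longrightarrow> (P xs \<longleftrightarrow> sat R xs \<phi>)" by (auto simp: set_eq_iff)
  then show "zero_definable_pred R m P" unfolding zero_definable_pred_def by blast
qed

lemma zero_definable_imp_definable:
  assumes "zero_definable R m X" shows "definable R m X"
proof -
  obtain \<phi> where "X = {xs. length xs = m \<and> sat R xs \<phi>}"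
    using assms unfolding zero_definable_def by blast
  then show ?thesis unfolding definable_def by (intro exI[of _ \<phi>] exI[of _ "[]"]) simp
qed

lemma zero_def_hypergraph_imp_def_hypergraph:
  "zero_def_hypergraph R k d V E \<Longrightarrow> def_hypergraph R k d V E"
  unfolding zero_def_hypergraph_def def_hypergraph_def by (auto intro: zero_definable_imp_definable)

lemma zero_definable_pred_cong:
  "zero_definable_pred R m P \<Longrightarrow> (\<And>xs. length xs = m \<Longrightarrow> P xs \<longleftrightarrow> Q xs) \<Longrightarrow> zero_definable_pred R m Q"
  unfolding zero_definable_pred_def by metis

lemma zero_definable_pred_sat: "zero_definable_pred R m (\<lambda>xs. sat R xs \<phi>)"
  unfolding zero_definable_pred_def by blast

lemma zero_definable_pred_const: "zero_definable_pred R m (\<lambda>_. c)"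
proof -
  let ?false = "Conj (Eq 0 0) (Neg (Eq 0 0))"
  show ?thesis
    unfolding zero_definable_pred_def by (rule exI[of _ "if c then Neg ?false else ?false"]) auto
qed

lemma zero_definable_pred_nth_eq:
  "i < m \<Longrightarrow> j < m \<Longrightarrow> zero_definable_pred R m (\<lambda>xs. xs ! i = xs ! j)"
  unfolding zero_definable_pred_def by (rule exI[of _ "Eq i j"]) simp

lemma zero_definable_pred_neg:
  "zero_definable_pred R m P \<Longrightarrow> zero_definable_pred R m (\<lambda>xs. \<not> P xs)"
  unfolding zero_definable_pred_def by (metis sat.simps(3))

lemma zero_definable_pred_conj:
  "zero_definable_pred R m P \<Longrightarrow> zero_definable_pred R m Q \<Longrightarrow> zero_definable_pred R m (\<lambda>xs. P xs \<and> Q xs)"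
  unfolding zero_definable_pred_def by (metis sat.simps(4))

lemma zero_definable_pred_disj:
  "zero_definable_pred R m P \<Longrightarrow> zero_definable_pred R m Q \<Longrightarrow> zero_definable_pred R m (\<lambda>xs. P xs \<or> Q xs)"
  using zero_definable_pred_neg[OF zero_definable_pred_conj[OF zero_definable_pred_neg
      zero_definable_pred_neg]]
  by simp

lemma zero_definable_pred_imp:
  "zero_definable_pred R m P \<Longrightarrow> zero_definable_pred R m Q \<Longrightarrow> zero_definable_pred R m (\<lambda>xs. P xs \<longrightarrow> Q xs)"
  using zero_definable_pred_disj[OF zero_definable_pred_neg] by simp

lemma zero_definable_pred_iff:
  "zero_definable_pred R m P \<Longrightarrow> zero_definable_pred R m Q \<Longrightarrow> zero_definable_pred R m (\<lambda>xs. P xs \<longleftrightarrow> Q xs)"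
  using zero_definable_pred_conj[OF zero_definable_pred_imp zero_definable_pred_imp]
  by (simp add: iff_conv_conj_imp)

lemma zero_definable_pred_Ball:
  assumes "finite I" "\<And>i. i \<in> I \<Longrightarrow> zero_definable_pred R m (P i)"
  shows "zero_definable_pred R m (\<lambda>xs. \<forall>i\<in>I. P i xs)"
  using assms
  by (induction I rule: finite_induct)
    (simp_all add: zero_definable_pred_const zero_definable_pred_conj)

lemma zero_definable_pred_Bex:
  assumes "finite I" "\<And>i. i \<in> I \<Longrightarrow> zero_definable_pred R m (P i)"
  shows "zero_definable_pred R m (\<lambda>xs. \<exists>i\<in>I. P i xs)"
  using assms
  by (induction I rule: finite_induct)
    (simp_all add: zero_definable_pred_const zero_definable_pred_disj)

lemma zero_definable_pred_all_less:
  "(\<And>i. i < (n::nat) \<Longrightarrow> zero_definable_pred R m (P i)) \<Longrightarrow> zero_definable_pred R m (\<lambda>xs. \<forall>i<n. P i xs)"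
  by (rule zero_definable_pred_cong[OF zero_definable_pred_Ball[of "{..<n}"]]) auto

lemma zero_definable_pred_ex_less:
  "(\<And>i. i < (n::nat) \<Longrightarrow> zero_definable_pred R m (P i)) \<Longrightarrow> zero_definable_pred R m (\<lambda>xs. \<exists>i<n. P i xs)"
  by (rule zero_definable_pred_cong[OF zero_definable_pred_Bex[of "{..<n}"]]) auto

fun rename :: "(nat \<Rightarrow> nat) \<Rightarrow> 'r fm \<Rightarrow> 'r fm" where
  "rename \<rho> (Eq i j) = Eq (\<rho> i) (\<rho> j)"
| "rename \<rho> (Rel r is) = Rel r (map \<rho> is)"
| "rename \<rho> (Neg \<phi>) = Neg (rename \<rho> \<phi>)"
| "rename \<rho> (Conj \<phi> \<psi>) = Conj (rename \<rho> \<phi>) (rename \<rho> \<psi>)"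
| "rename \<rho> (Ex \<phi>) = Ex (rename (case_nat 0 (Suc \<circ> \<rho>)) \<phi>)"

lemma sat_rename:
  assumes "\<And>i. i < n \<longleftrightarrow> \<rho> i < length e"
  shows "sat R e (rename \<rho> \<phi>) \<longleftrightarrow> sat R (map (\<lambda>i. e ! \<rho> i) [0..<n]) \<phi>"
  using assms
proof (induction \<phi> arbitrary: \<rho> n e)
  case (Eq i j)
  then have "i < n \<longleftrightarrow> \<rho> i < length e" "j < n \<longleftrightarrow> \<rho> j < length e" by blast+
  then show ?case by auto
next
  case (Rel r ids)
  then have "(\<forall>i\<in>set ids. \<rho> i < length e) \<longleftrightarrow> (\<forall>i\<in>set ids. i < n)" by blast
  then show ?case by (auto cong: map_cong)
next
  case (Ex \<phi>)
  let ?\<rho> = "case_nat 0 (Suc \<circ> \<rho>)"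
  have "i < Suc n \<longleftrightarrow> ?\<rho> i < length (x # e)" for i x
    using Ex.prems by (cases i) auto
  note IH = Ex.IH[OF this]
  have "map (\<lambda>i. (x # e) ! ?\<rho> i) [0..<Suc n] = x # map (\<lambda>i. e ! \<rho> i) [0..<n]" for x
    by (simp add: map_upt_Suc del: upt_Suc)
  then show ?case using IH by simp
next
  case (Neg \<phi>)
  then show ?case by simp
next
  case (Conj \<phi> \<psi>)
  show ?case using Conj.IH(1,2)[OF Conj.prems] by simp
qed

lemma zero_definable_pred_pull:
  assumes "zero_definable_pred R n P" "\<And>i. i < n \<Longrightarrow> \<rho> i < m"
  shows "zero_definable_pred R m (\<lambda>xs. P (map (\<lambda>i. xs ! \<rho> i) [0..<n]))"
proof -
  obtain \<phi> where \<phi>: "\<And>ys. length ys = n \<Longrightarrow> P ys \<longleftrightarrow> sat R ys \<phi>"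
    using assms(1) unfolding zero_definable_pred_def by blast
  \<comment> \<open>Variables beyond \<open>n\<close> are sent past the environment, so atoms using them stay false.\<close>
  define \<rho>' where "\<rho>' i = (if i < n then \<rho> i else m + i)" for i
  have "sat R xs (rename \<rho>' \<phi>) \<longleftrightarrow> P (map (\<lambda>i. xs ! \<rho> i) [0..<n])" if "length xs = m" for xs
  proof -
    have "sat R xs (rename \<rho>' \<phi>) \<longleftrightarrow> sat R (map (\<lambda>i. xs ! \<rho>' i) [0..<n]) \<phi>"
      by (rule sat_rename) (use assms(2) that in \<open>auto simp: \<rho>'_def\<close>)
    also have "map (\<lambda>i. xs ! \<rho>' i) [0..<n] = map (\<lambda>i. xs ! \<rho> i) [0..<n]"
      by (simp add: \<rho>'_def)
    finally show ?thesis using \<phi> by simp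
  qed
  then show ?thesis unfolding zero_definable_pred_def by metis
qed

lemma block_index_less: "j < k \<Longrightarrow> t < d \<Longrightarrow> j * d + t < d * (k::nat)"
proof -
  assume "j < k" "t < d"
  then have "j * d + t < Suc j * d" by simp
  also have "\<dots> \<le> k * d" using \<open>j < k\<close> by (intro mult_le_mono1) simp
  finally show ?thesis by (simp add: mult.commute)
qed

definition blocks :: "nat \<Rightarrow> nat \<Rightarrow> 'a list \<Rightarrow> 'a list list" where
  "blocks d k zs = map (\<lambda>j. map (\<lambda>t. zs ! (j * d + t)) [0..<d]) [0..<k]"

lemma length_blocks [simp]: "length (blocks d k zs) = k"
  by (simp add: blocks_def)

lemma nth_blocks [simp]: "j < k \<Longrightarrow> blocks d k zs ! j = map (\<lambda>t. zs ! (j * d + t)) [0..<d]"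
  by (simp add: blocks_def)

lemma length_in_blocks: "v \<in> set (blocks d k zs) \<Longrightarrow> length v = d"
  by (auto simp: blocks_def)

lemma length_concat_uniform: "\<forall>v\<in>set vs. length v = d \<Longrightarrow> length (concat vs) = d * length vs"
  by (induction vs) auto

lemma nth_concat_uniform:
  "\<forall>v\<in>set vs. length v = d \<Longrightarrow> j < length vs \<Longrightarrow> t < d \<Longrightarrow> concat vs ! (j * d + t) = vs ! j ! t"
proof (induction vs arbitrary: j)
  case (Cons v vs)
  then show ?case by (cases j) (auto simp: nth_append add.assoc)
qed simp

lemma blocks_concat: "\<forall>v\<in>set vs. length v = d \<Longrightarrow> blocks d (length vs) (concat vs) = vs"
  by (rule nth_equalityI) (auto simp: nth_concat_uniform intro: nth_equalityI)

lemma concat_blocks: "length zs = d * k \<Longrightarrow> concat (blocks d k zs) = zs"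
proof (rule nth_equalityI)
  assume len: "length zs = d * k"
  have uniform: "\<forall>v\<in>set (blocks d k zs). length v = d" by (auto dest: length_in_blocks)
  then show "length (concat (blocks d k zs)) = length zs"
    using len by (simp add: length_concat_uniform[OF uniform])
  fix x assume "x < length (concat (blocks d k zs))"
  then have x: "x < d * k" by (simp add: length_concat_uniform[OF uniform])
  then have "0 < d" by (cases "d = 0") auto
  with x have "x div d < k" "x mod d < d"
    by (auto simp: less_mult_imp_div_less mult.commute)
  then have "concat (blocks d k zs) ! (x div d * d + x mod d) = blocks d k zs ! (x div d) ! (x mod d)"
    by (intro nth_concat_uniform[OF uniform]) simp_all
  also have "\<dots> = zs ! (x div d * d + x mod d)"
    using \<open>x div d < k\<close> \<open>x mod d < d\<close> by simp
  finally show "concat (blocks d k zs) ! x = zs ! x" by simp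
qed

lemma concat_image_uniform:
  assumes "\<And>vs. vs \<in> T \<Longrightarrow> length vs = k \<and> (\<forall>v\<in>set vs. length v = d)"
  shows "concat ` T = {zs. length zs = d * k \<and> blocks d k zs \<in> T}"
proof (intro set_eqI iffI)
  fix zs assume "zs \<in> concat ` T"
  then obtain vs where "vs \<in> T" "zs = concat vs" by blast
  then show "zs \<in> {zs. length zs = d * k \<and> blocks d k zs \<in> T}"
    using assms[of vs] by (auto simp: length_concat_uniform blocks_concat)
next
  fix zs assume "zs \<in> {zs. length zs = d * k \<and> blocks d k zs \<in> T}"
  then show "zs \<in> concat ` T" using concat_blocks by (metis (mono_tags) image_eqI mem_Collect_eq)
qed

lemma concat_mem_concat_image_iff:
  assumes "\<And>ws. ws \<in> T \<Longrightarrow> length ws = k \<and> (\<forall>w\<in>set ws. length w = d)"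
    and "length vs = k" "\<forall>v\<in>set vs. length v = d"
  shows "concat vs \<in> concat ` T \<longleftrightarrow> vs \<in> T"
  using blocks_concat[OF assms(3)] length_concat_uniform[OF assms(3)] assms(2)
  by (simp add: concat_image_uniform[OF assms(1)])

lemma zero_definable_pred_block:
  assumes "zero_definable_pred R d P" "j < k"
  shows "zero_definable_pred R (d * k) (\<lambda>zs. P (blocks d k zs ! j))"
  using zero_definable_pred_pull[OF assms(1), of "\<lambda>t. j * d + t" "d * k"] assms(2)
  by (simp add: block_index_less)

lemma zero_definable_concat_image:
  assumes "\<And>vs. vs \<in> T \<Longrightarrow> length vs = k \<and> (\<forall>v\<in>set vs. length v = d)"
    and "zero_definable_pred R (d * k) (\<lambda>zs. blocks d k zs \<in> T)"
  shows "zero_definable R (d * k) (concat ` T)"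
  using assms(2) by (simp add: concat_image_uniform[OF assms(1)] zero_definable_pred_iff_zero_definable)

lemma zero_definable_pred_distinct_blocks:
  "zero_definable_pred R (d * k) (\<lambda>zs. distinct (blocks d k zs))"
proof -
  have "zero_definable_pred R (d * k)
    (\<lambda>zs. \<forall>i<k. \<forall>j<k. i \<noteq> j \<longrightarrow> \<not> (\<forall>t<d. zs ! (i * d + t) = zs ! (j * d + t)))"
    by (intro zero_definable_pred_all_less zero_definable_pred_imp zero_definable_pred_const
        zero_definable_pred_neg zero_definable_pred_nth_eq block_index_less)
  then show ?thesis
    by (rule zero_definable_pred_cong) (auto simp: distinct_conv_nth atLeast0LessThan)
qed

definition sym_closure :: "'v list set \<Rightarrow> 'v list set" where
  "sym_closure S = {vs. \<exists>ws\<in>S. mset ws = mset vs}"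

lemma hypergraph_sym_closure:
  assumes "\<And>ws. ws \<in> S \<Longrightarrow> length ws = k \<and> set ws \<subseteq> V \<and> distinct ws"
  shows "hypergraph k V (sym_closure S)"
  unfolding hypergraph_def
proof (intro conjI ballI allI impI)
  fix vs assume "vs \<in> sym_closure S"
  then obtain ws where "ws \<in> S" "mset ws = mset vs" unfolding sym_closure_def by blast
  then show "length vs = k" "set vs \<subseteq> V" "distinct vs"
    using assms[of ws] by (metis mset_eq_length, metis mset_eq_setD, metis mset_eq_imp_distinct_iff)
next
  fix vs ws :: "'a list" assume "mset vs = mset ws"
  then show "vs \<in> sym_closure S \<longleftrightarrow> ws \<in> sym_closure S" unfolding sym_closure_def by simp
qed

lemma mem_sym_closure_uniform:
  assumes "\<And>ws. ws \<in> S \<Longrightarrow> length ws = k \<and> (\<forall>w\<in>set ws. length w = d)" "vs \<in> sym_closure S"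
  shows "length vs = k \<and> (\<forall>v\<in>set vs. length v = d)"
proof -
  obtain ws where "ws \<in> S" "mset ws = mset vs" using assms(2) unfolding sym_closure_def by blast
  then show ?thesis using assms(1)[of ws] by (metis mset_eq_length mset_eq_setD)
qed

lemma mem_sym_closure_iff_permute_list:
  "vs \<in> sym_closure S \<longleftrightarrow> (\<exists>\<pi>\<in>{\<pi>. \<pi> permutes {..<length vs}}. permute_list \<pi> vs \<in> S)"
proof
  assume "vs \<in> sym_closure S"
  then obtain ws where "ws \<in> S" "mset ws = mset vs" unfolding sym_closure_def by blast
  then show "\<exists>\<pi>\<in>{\<pi>. \<pi> permutes {..<length vs}}. permute_list \<pi> vs \<in> S"
    by (metis mem_Collect_eq mset_eq_permutation)
next
  assume "\<exists>\<pi>\<in>{\<pi>. \<pi> permutes {..<length vs}}. permute_list \<pi> vs \<in> S"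
  then show "vs \<in> sym_closure S" unfolding sym_closure_def by (auto intro: mset_permute_list)
qed

lemma blocks_permute_blocks:
  assumes "\<pi> permutes {..<k}"
  shows "blocks d k (map (\<lambda>x. zs ! (\<pi> (x div d) * d + x mod d)) [0..<d * k])
    = permute_list \<pi> (blocks d k zs)"
proof (rule nth_equalityI)
  fix j assume "j < length (blocks d k (map (\<lambda>x. zs ! (\<pi> (x div d) * d + x mod d)) [0..<d * k]))"
  then have j: "j < k" by simp
  then have "\<pi> j < k" using permutes_in_image[OF assms] by simp
  then show "blocks d k (map (\<lambda>x. zs ! (\<pi> (x div d) * d + x mod d)) [0..<d * k]) ! j
      = permute_list \<pi> (blocks d k zs) ! j"
    using j assms by (auto simp: permute_list_nth block_index_less)
qed simp

lemma zero_definable_pred_blocks_sym_closure: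
  assumes "zero_definable_pred R (d * k) (\<lambda>zs. blocks d k zs \<in> S)"
  shows "zero_definable_pred R (d * k) (\<lambda>zs. blocks d k zs \<in> sym_closure S)"
proof -
  have "zero_definable_pred R (d * k) (\<lambda>zs. \<exists>\<pi>\<in>{\<pi>. \<pi> permutes {..<k}}.
      blocks d k (map (\<lambda>x. zs ! (\<pi> (x div d) * d + x mod d)) [0..<d * k]) \<in> S)"
  proof (rule zero_definable_pred_Bex)
    fix \<pi> assume "\<pi> \<in> {\<pi>. \<pi> permutes {..<k}}"
    have "\<pi> (x div d) * d + x mod d < d * k" if "x < d * k" for x
    proof (rule block_index_less)
      have "0 < d" using that by (cases d) auto
      then have "x div d < k" using that by (simp add: less_mult_imp_div_less mult.commute)
      then show "\<pi> (x div d) < k" "x mod d < d"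
        using \<open>0 < d\<close> \<open>\<pi> \<in> {\<pi>. \<pi> permutes {..<k}}\<close> permutes_in_image by fastforce+
    qed
    then show "zero_definable_pred R (d * k)
        (\<lambda>zs. blocks d k (map (\<lambda>x. zs ! (\<pi> (x div d) * d + x mod d)) [0..<d * k]) \<in> S)"
      by (intro zero_definable_pred_pull[OF assms])
  qed (simp add: finite_permutations)
  then show ?thesis
    by (rule zero_definable_pred_cong)
      (simp add: mem_sym_closure_iff_permute_list blocks_permute_blocks)
qed

definition pullback_of_definable ::
  "('s \<Rightarrow> 'b list \<Rightarrow> bool) \<Rightarrow> ('a \<Rightarrow> 'b) list \<Rightarrow> nat list \<Rightarrow> nat \<Rightarrow> 'a list set \<Rightarrow> bool" where
  "pullback_of_definable RN fs idx m X \<longleftrightarrow> length idx = length fs \<and> (\<forall>i\<in>set idx. i < m) \<and>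
     (\<exists>Y. definable RN (length fs) Y \<and> X = {as. length as = m \<and> map2 (\<lambda>f i. f (as ! i)) fs idx \<in> Y})"

lemma locally_trace_defines_iff_pullback:
  fixes RM :: "'r \<Rightarrow> 'a list \<Rightarrow> bool" and RN :: "'s \<Rightarrow> 'b list \<Rightarrow> bool"
  shows "locally_trace_defines RN RM \<longleftrightarrow>
    (\<exists>\<E>. \<forall>m X. definable RM m X \<longrightarrow> (\<exists>fs idx. set fs \<subseteq> \<E> \<and> pullback_of_definable RN fs idx m X))"
proof -
  have "(\<exists>fs idx Y. length idx = length fs \<and> set fs \<subseteq> \<E> \<and> (\<forall>i\<in>set idx. i < m) \<and>
        definable RN (length fs) Y \<and> X = {as. length as = m \<and> map2 (\<lambda>f i. f (as ! i)) fs idx \<in> Y})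
      \<longleftrightarrow> (\<exists>fs idx. set fs \<subseteq> \<E> \<and> pullback_of_definable RN fs idx m X)"
    for \<E> :: "('a \<Rightarrow> 'b) set" and m X
    unfolding pullback_of_definable_def by blast
  then show ?thesis unfolding locally_trace_defines_def by simp
qed

section \<open>Embedding definable hypergraphs into zero-definable ones\<close>

definition distinct_tuples :: "nat \<Rightarrow> nat \<Rightarrow> ('b list \<Rightarrow> bool) \<Rightarrow> 'b list list set" where
  "distinct_tuples k d Q =
    {ws. length ws = k \<and> (\<forall>w\<in>set ws. length w = d) \<and> distinct ws \<and> Q (concat ws)}"

lemma zero_def_hypergraph_distinct_tuples:
  assumes "zero_definable_pred R (d * k) Q"
  shows "zero_def_hypergraph R k d {w. length w = d} (sym_closure (distinct_tuples k d Q))"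
proof -
  have uniform: "length ws = k \<and> (\<forall>w\<in>set ws. length w = d)" if "ws \<in> distinct_tuples k d Q" for ws
    using that by (simp add: distinct_tuples_def)
  have "hypergraph k {w. length w = d} (sym_closure (distinct_tuples k d Q))"
    by (rule hypergraph_sym_closure) (auto simp: distinct_tuples_def)
  moreover have "zero_definable R d {w. length w = d}"
    using zero_definable_pred_const[of R d True] by (simp add: zero_definable_pred_iff_zero_definable)
  moreover have "zero_definable R (d * k) (concat ` sym_closure (distinct_tuples k d Q))"
  proof (rule zero_definable_concat_image)
    show "length vs = k \<and> (\<forall>v\<in>set vs. length v = d)"
      if "vs \<in> sym_closure (distinct_tuples k d Q)" for vs
      using mem_sym_closure_uniform[OF uniform that] .
    have "zero_definable_pred R (d * k) (\<lambda>zs. distinct (blocks d k zs) \<and> Q zs)"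
      by (intro zero_definable_pred_conj zero_definable_pred_distinct_blocks assms)
    then have "zero_definable_pred R (d * k) (\<lambda>zs. blocks d k zs \<in> distinct_tuples k d Q)"
      by (rule zero_definable_pred_cong)
        (auto simp: distinct_tuples_def concat_blocks dest: length_in_blocks)
    then show "zero_definable_pred R (d * k) (\<lambda>zs. blocks d k zs \<in> sym_closure (distinct_tuples k d Q))"
      by (rule zero_definable_pred_blocks_sym_closure)
  qed
  ultimately show ?thesis unfolding zero_def_hypergraph_def by simp
qed

lemma hg_embedding_distinct_tuples:
  assumes hV: "hypergraph k V E" and inj: "inj_on \<tau> V" and len: "\<And>v. v \<in> V \<Longrightarrow> length (\<tau> v) = d"
    and code: "\<And>vs. length vs = k \<Longrightarrow> set vs \<subseteq> V \<Longrightarrow> vs \<in> E \<longleftrightarrow> Q (concat (map \<tau> vs))"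
  shows "hg_embedding k \<tau> V E {w. length w = d} (sym_closure (distinct_tuples k d Q))"
  unfolding hg_embedding_def
proof (intro conjI allI impI)
  show "\<tau> ` V \<subseteq> {w. length w = d}" using len by auto
  show "inj_on \<tau> V" by (fact inj)
  fix vs assume vs: "length vs = k" "set vs \<subseteq> V"
  show "vs \<in> E \<longleftrightarrow> map \<tau> vs \<in> sym_closure (distinct_tuples k d Q)"
  proof
    assume "vs \<in> E"
    then have "distinct (map \<tau> vs)"
      using hV inj vs(2) unfolding hypergraph_def by (auto simp: distinct_map inj_on_subset)
    with \<open>vs \<in> E\<close> have "map \<tau> vs \<in> distinct_tuples k d Q"
      using vs len code by (auto simp: distinct_tuples_def)
    then show "map \<tau> vs \<in> sym_closure (distinct_tuples k d Q)" unfolding sym_closure_def by blast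
  next
    assume "map \<tau> vs \<in> sym_closure (distinct_tuples k d Q)"
    then obtain \<pi> where \<pi>: "\<pi> permutes {..<length vs}"
      and "permute_list \<pi> (map \<tau> vs) \<in> distinct_tuples k d Q"
      by (auto simp: mem_sym_closure_iff_permute_list)
    then have "Q (concat (map \<tau> (permute_list \<pi> vs)))"
      by (simp add: distinct_tuples_def permute_list_map)
    then have "permute_list \<pi> vs \<in> E" using code[of "permute_list \<pi> vs"] \<pi> vs by simp
    then show "vs \<in> E"
      using hV vs \<pi> unfolding hypergraph_def by (metis mset_permute_list)
  qed
qed

definition trace_code :: "('a \<Rightarrow> 'b) list \<Rightarrow> 'b list \<Rightarrow> 'a list \<Rightarrow> 'b list" where
  "trace_code G c v = concat (map (\<lambda>g. map g v) G) @ c"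

lemma length_concat_map_map: "length (concat (map (\<lambda>g. map g v) G)) = length v * length G"
  by (induction G) auto

lemma length_trace_code: "length (trace_code G c v) = length v * length G + length c"
  by (simp add: trace_code_def length_concat_map_map)

lemma nth_trace_code:
  "i < length G \<Longrightarrow> t < length v \<Longrightarrow> trace_code G c v ! (i * length v + t) = (G ! i) (v ! t)"
  using nth_concat_uniform[of "map (\<lambda>g. map g v) G" "length v" i t]
  by (simp add: trace_code_def nth_append length_concat_map_map block_index_less)

lemma nth_trace_code_param:
  "t < length c \<Longrightarrow> trace_code G c v ! (length v * length G + t) = c ! t"
  by (simp add: trace_code_def nth_append length_concat_map_map)

lemma inj_on_trace_code:
  assumes "\<And>x y. \<forall>g\<in>set G. g x = g y \<Longrightarrow> x = y"
  shows "inj_on (trace_code G c) {v. length v = d}"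
proof (rule inj_onI)
  fix v w assume "v \<in> {v. length v = d}" "w \<in> {v. length v = d}" "trace_code G c v = trace_code G c w"
  then have len: "length v = d" "length w = d"
    and "concat (map (\<lambda>g. map g v) G) = concat (map (\<lambda>g. map g w) G)"
    by (simp_all add: trace_code_def)
  then have "blocks d (length G) (concat (map (\<lambda>g. map g v) G))
      = blocks d (length G) (concat (map (\<lambda>g. map g w) G))" by simp
  then have "map (\<lambda>g. map g v) G = map (\<lambda>g. map g w) G"
    using blocks_concat[of "map (\<lambda>g. map g _) G" d] len by simp
  then have "\<forall>g\<in>set G. g (v ! t) = g (w ! t)" if "t < d" for t
    using that len by (auto simp: map_eq_conv list_eq_iff_nth_eq in_set_conv_nth)
  then show "v = w" using len assms by (auto intro: nth_equalityI)
qed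

lemma nth_concat_map_trace_code:
  assumes "\<forall>v\<in>set vs. length v = d" "q < length vs" "x < d * length G + length c"
  shows "concat (map (trace_code G c) vs) ! (q * (d * length G + length c) + x)
    = trace_code G c (vs ! q) ! x"
  using nth_concat_uniform[of "map (trace_code G c) vs" "d * length G + length c" q x] assms
  by (simp add: length_trace_code mult.commute)

lemma trace_code_reads_trace:
  fixes fs fs' :: "('a \<Rightarrow> 'b) list" and c :: "'b list"
  assumes idx: "length idx = length fs" "\<forall>i\<in>set idx. i < d * k" and k: "0 < k"
  defines "d' \<equiv> d * length (fs @ fs') + length c"
  shows "\<exists>\<rho>. (\<forall>j < length fs + length c. \<rho> j < d' * k) \<and>
     (\<forall>vs. length vs = k \<longrightarrow> (\<forall>v\<in>set vs. length v = d) \<longrightarrow>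
        map (\<lambda>j. concat (map (trace_code (fs @ fs') c) vs) ! \<rho> j) [0..<length fs + length c]
        = map2 (\<lambda>f i. f (concat vs ! i)) fs idx @ c)"
proof -
  \<comment> \<open>Entry \<open>idx ! j = q * d + t\<close> of \<open>concat vs\<close> is the \<open>t\<close>-th point of vertex \<open>q\<close>, and its
    image under \<open>fs ! j\<close> sits in block \<open>j\<close> of the \<open>q\<close>-th code word; the parameters are read
    from the first code word.\<close>
  define \<rho> where "\<rho> j = (if j < length fs then (idx ! j div d) * d' + (j * d + idx ! j mod d)
      else 0 * d' + (d * length (fs @ fs') + (j - length fs)))" for j
  have entry: "idx ! j div d < k" "idx ! j mod d < d" "j * d + idx ! j mod d < d'"
    if "j < length fs" for j
  proof -
    have "idx ! j < d * k" using idx that by simp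
    moreover from this have "0 < d" by (cases d) auto
    ultimately show "idx ! j div d < k" "idx ! j mod d < d"
      by (simp_all add: less_mult_imp_div_less mult.commute)
    then show "j * d + idx ! j mod d < d'"
      using block_index_less[of j "length (fs @ fs')" "idx ! j mod d" d] that by (simp add: d'_def)
  qed
  have "\<rho> j < d' * k" if "j < length fs + length c" for j
  proof (cases "j < length fs")
    case True
    then show ?thesis using entry[OF True] block_index_less by (simp add: \<rho>_def)
  next
    case False
    then show ?thesis
      using that block_index_less[OF k, of "d * length (fs @ fs') + (j - length fs)" d']
      by (simp add: \<rho>_def d'_def)
  qed
  moreover have "concat (map (trace_code (fs @ fs') c) vs) ! \<rho> j
      = (map2 (\<lambda>f i. f (concat vs ! i)) fs idx @ c) ! j"
    if vs: "length vs = k" "\<forall>v\<in>set vs. length v = d" and j: "j < length fs + length c" for vs j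
  proof (cases "j < length fs")
    case True
    let ?q = "idx ! j div d" and ?t = "idx ! j mod d"
    have "concat (map (trace_code (fs @ fs') c) vs) ! \<rho> j
        = trace_code (fs @ fs') c (vs ! ?q) ! (j * d + ?t)"
      using nth_concat_map_trace_code[OF vs(2), of ?q "j * d + ?t" "fs @ fs'" c]
        entry[OF True] vs(1) True
      by (simp add: \<rho>_def d'_def)
    also have "\<dots> = (fs ! j) (vs ! ?q ! ?t)"
      using nth_trace_code[of j "fs @ fs'" ?t "vs ! ?q" c] entry[OF True] vs True
      by (simp add: nth_append)
    also have "vs ! ?q ! ?t = concat vs ! (idx ! j)"
      using nth_concat_uniform[OF vs(2), of ?q ?t] entry[OF True] vs(1) by simp
    finally show ?thesis using True idx(1) by (simp add: nth_append)
  next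
    case False
    let ?x = "d * length (fs @ fs') + (j - length fs)"
    have "concat (map (trace_code (fs @ fs') c) vs) ! \<rho> j = trace_code (fs @ fs') c (vs ! 0) ! ?x"
      using False nth_concat_map_trace_code[OF vs(2), of 0 ?x "fs @ fs'" c] vs(1) j k
      by (simp add: \<rho>_def d'_def)
    also have "\<dots> = c ! (j - length fs)"
      using nth_trace_code_param[of "j - length fs" c "fs @ fs'" "vs ! 0"] vs j k False
      by (simp add: mult.commute)
    finally show ?thesis using False idx(1) by (simp add: nth_append)
  qed
  ultimately show ?thesis
    by (intro exI[of _ \<rho>] conjI allI impI nth_equalityI) (simp_all add: idx(1))
qed

lemma separating_if_pullback_of_equality:
  assumes "pullback_of_definable RN fs idx 2 {xs. length xs = 2 \<and> xs ! 0 = xs ! 1}"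
    and fs: "\<forall>g\<in>set fs. g x = g y"
  shows "x = y"
proof -
  obtain Y where idx: "\<forall>i\<in>set idx. i < 2"
    and eq: "{xs. length xs = 2 \<and> xs ! 0 = xs ! 1}
      = {as. length as = 2 \<and> map2 (\<lambda>f i. f (as ! i)) fs idx \<in> Y}"
    using assms(1) unfolding pullback_of_definable_def by blast
  have same: "map2 (\<lambda>f i. f ([x, y] ! i)) fs idx = map2 (\<lambda>f i. f ([x, x] ! i)) fs idx"
  proof (rule map_cong[OF refl], clarify)
    fix g i assume "(g, i) \<in> set (zip fs idx)"
    then have "g \<in> set fs" "i < 2" using idx by (auto dest: set_zip_leftD set_zip_rightD)
    then show "g ([x, y] ! i) = g ([x, x] ! i)" using fs by (cases i) auto
  qed
  have "[x, x] \<in> {xs. length xs = 2 \<and> xs ! 0 = xs ! 1}" by simp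
  then have "map2 (\<lambda>f i. f ([x, x] ! i)) fs idx \<in> Y" unfolding eq by simp
  then have "[x, y] \<in> {as. length as = 2 \<and> map2 (\<lambda>f i. f (as ! i)) fs idx \<in> Y}"
    unfolding mem_Collect_eq same by simp
  then show ?thesis unfolding eq[symmetric] by simp
qed

lemma zero_def_embedding_if_pullback:
  fixes RN :: "'s \<Rightarrow> 'b list \<Rightarrow> bool" and fs fs' :: "('a \<Rightarrow> 'b) list"
  assumes hV: "hypergraph k V E" "V \<subseteq> {v. length v = d}" and k: "0 < k"
    and "pullback_of_definable RN fs idx (d * k) (concat ` E)"
    and separating: "\<And>x y. \<forall>g\<in>set fs'. g x = g y \<Longrightarrow> x = y"
  shows "\<exists>d' W F f. zero_def_hypergraph RN k d' W F \<and> hg_embedding k f V E W F"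
proof -
  obtain Y where idx: "length idx = length fs" "\<forall>i\<in>set idx. i < d * k"
    and "definable RN (length fs) Y"
    and E: "concat ` E = {as. length as = d * k \<and> map2 (\<lambda>f i. f (as ! i)) fs idx \<in> Y}"
    using assms(4) unfolding pullback_of_definable_def by blast
  then obtain \<phi> c where Y: "Y = {xs. length xs = length fs \<and> sat RN (xs @ c) \<phi>}"
    unfolding definable_def by blast
  define d' where "d' = d * length (fs @ fs') + length c"
  obtain \<rho> where \<rho>: "\<forall>j < length fs + length c. \<rho> j < d' * k"
    and reads: "\<forall>vs. length vs = k \<longrightarrow> (\<forall>v\<in>set vs. length v = d) \<longrightarrow>
        map (\<lambda>j. concat (map (trace_code (fs @ fs') c) vs) ! \<rho> j) [0..<length fs + length c]
        = map2 (\<lambda>f i. f (concat vs ! i)) fs idx @ c"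
    using trace_code_reads_trace[OF idx k, where fs' = fs' and c = c] unfolding d'_def
    by (elim exE conjE) blast
  let ?Q = "\<lambda>zs. sat RN (map (\<lambda>j. zs ! \<rho> j) [0..<length fs + length c]) \<phi>"
  have "zero_def_hypergraph RN k d' {w. length w = d'} (sym_closure (distinct_tuples k d' ?Q))"
    using \<rho>
    by (intro zero_def_hypergraph_distinct_tuples zero_definable_pred_pull zero_definable_pred_sat) auto
  moreover have "hg_embedding k (trace_code (fs @ fs') c) V E
      {w. length w = d'} (sym_closure (distinct_tuples k d' ?Q))"
  proof (rule hg_embedding_distinct_tuples[OF hV(1)])
    show "inj_on (trace_code (fs @ fs') c) V"
      using inj_on_trace_code[of "fs @ fs'"] separating hV(2) by (auto intro: inj_on_subset)
    show "length (trace_code (fs @ fs') c v) = d'" if "v \<in> V" for v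
      using that hV(2) by (auto simp: length_trace_code d'_def mult.commute)
    fix vs assume vs: "length vs = k" "set vs \<subseteq> V"
    then have uniform: "\<forall>v\<in>set vs. length v = d" using hV(2) by auto
    have E_uniform: "length ws = k \<and> (\<forall>w\<in>set ws. length w = d)" if "ws \<in> E" for ws
      using that hV unfolding hypergraph_def by blast
    have "vs \<in> E \<longleftrightarrow> concat vs \<in> concat ` E"
      using concat_mem_concat_image_iff[OF E_uniform vs(1) uniform] by simp
    also have "\<dots> \<longleftrightarrow> sat RN (map2 (\<lambda>f i. f (concat vs ! i)) fs idx @ c) \<phi>"
      using length_concat_uniform[OF uniform] vs(1) idx(1) by (simp add: E Y)
    finally show "vs \<in> E \<longleftrightarrow>
        sat RN (map (\<lambda>j. concat (map (trace_code (fs @ fs') c) vs) ! \<rho> j) [0..<length fs + length c]) \<phi>"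
      using reads vs(1) uniform by simp
  qed
  ultimately show ?thesis by blast
qed

lemma zero_def_embedding_if_locally_trace_defines:
  fixes RM :: "'r \<Rightarrow> 'a list \<Rightarrow> bool" and RN :: "'s \<Rightarrow> 'b list \<Rightarrow> bool"
  assumes "locally_trace_defines RN RM" and k: "0 < k" and "def_hypergraph RM k d V E"
  shows "\<exists>d' W F f. zero_def_hypergraph RN k d' W F \<and> hg_embedding k f V E W F"
proof -
  obtain \<E> :: "('a \<Rightarrow> 'b) set" where trace: "\<And>m X. definable RM m X \<Longrightarrow>
      \<exists>fs idx. set fs \<subseteq> \<E> \<and> pullback_of_definable RN fs idx m X"
    using assms(1) unfolding locally_trace_defines_iff_pullback by blast
  have hV: "hypergraph k V E" "V \<subseteq> {v. length v = d}" and "definable RM (d * k) (concat ` E)"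
    using assms(3) unfolding def_hypergraph_def by auto
  from trace[OF this(3)] obtain fs :: "('a \<Rightarrow> 'b) list" and idx
    where E: "pullback_of_definable RN fs idx (d * k) (concat ` E)"
    by blast
  have "definable RM 2 {xs. length xs = 2 \<and> xs ! 0 = xs ! 1}"
    using zero_definable_pred_nth_eq[of 0 2 1 RM]
    by (simp add: zero_definable_pred_iff_zero_definable zero_definable_imp_definable)
  from trace[OF this] obtain fs' :: "('a \<Rightarrow> 'b) list" and idx'
    where "pullback_of_definable RN fs' idx' 2 {xs. length xs = 2 \<and> xs ! 0 = xs ! 1}"
    by blast
  then show ?thesis
    by (intro zero_def_embedding_if_pullback[OF hV k E] separating_if_pullback_of_equality)
qed

section \<open>Recovering local trace definitions from embeddings\<close>

text \<open>
  A vertex has the shape \<open>a # u # s @ c\<close> with \<open>length s = K\<close>; it has sort \<open>i\<close> when \<open>s ! i\<close>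
  is the only entry of \<open>s\<close> different from \<open>u\<close>. Sorts let a parameter-free formula tell
  the positions of an edge apart, so that a symmetric relation still codes the ordered
  tuple of points \<open>a\<close> of the vertices of sorts \<open>0, \<dots>, m - 1\<close>.
\<close>

definition has_sort :: "nat \<Rightarrow> nat \<Rightarrow> 'a list \<Rightarrow> bool" where
  "has_sort K i v \<longleftrightarrow> (\<forall>j<K. v ! (2 + j) \<noteq> v ! 1 \<longleftrightarrow> j = i)"

lemma has_sort_unique: "has_sort K i v \<Longrightarrow> has_sort K i' v \<Longrightarrow> i < K \<Longrightarrow> i' < K \<Longrightarrow> i = i'"
  unfolding has_sort_def by blast

lemma zero_definable_pred_has_sort: "K + 2 \<le> d \<Longrightarrow> zero_definable_pred R d (has_sort K i)"
  unfolding has_sort_def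
  by (intro zero_definable_pred_all_less zero_definable_pred_iff zero_definable_pred_neg
      zero_definable_pred_nth_eq zero_definable_pred_const) auto

definition sort_vertices :: "nat \<Rightarrow> nat \<Rightarrow> 'a list set" where
  "sort_vertices K p = {v. length v = K + 2 + p \<and> (\<exists>i<K. has_sort K i v)}"

definition sorted_edges :: "('r \<Rightarrow> 'a list \<Rightarrow> bool) \<Rightarrow> 'r fm \<Rightarrow> nat \<Rightarrow> nat \<Rightarrow> nat \<Rightarrow> 'a list list set" where
  "sorted_edges R \<phi> m K p = {vs. length vs = K \<and> (\<forall>v\<in>set vs. length v = K + 2 + p) \<and>
     (\<forall>j<K. has_sort K j (vs ! j)) \<and> (\<forall>j<K. \<forall>t<p. vs ! j ! (K + 2 + t) = vs ! 0 ! (K + 2 + t)) \<and>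
     sat R (map (\<lambda>i. vs ! i ! 0) [0..<m] @ map (\<lambda>t. vs ! 0 ! (K + 2 + t)) [0..<p]) \<phi>}"

lemma zero_definable_sort_vertices: "zero_definable R (K + 2 + p) (sort_vertices K p)"
proof -
  have "zero_definable_pred R (K + 2 + p) (\<lambda>v. \<exists>i<K. has_sort K i v)"
    by (intro zero_definable_pred_ex_less zero_definable_pred_has_sort) simp
  then show ?thesis by (simp add: zero_definable_pred_iff_zero_definable sort_vertices_def)
qed

lemma sorted_tuple_unique:
  assumes "length vs = K" "length ws = K" "\<forall>j<K. has_sort K j (vs ! j)" "\<forall>j<K. has_sort K j (ws ! j)"
    and "set ws \<subseteq> set vs"
  shows "ws = vs"
proof (rule nth_equalityI)
  fix j assume "j < length ws"
  then have j: "j < K" using assms(2) by simp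
  then have "ws ! j \<in> set vs" using assms(2,5) by auto
  then obtain i where "i < K" "ws ! j = vs ! i" using assms(1) by (metis in_set_conv_nth)
  then show "ws ! j = vs ! j" using assms(3,4) j has_sort_unique by metis
qed (simp add: assms)

lemma hypergraph_sorted_edges:
  "hypergraph K (sort_vertices K p) (sym_closure (sorted_edges R \<phi> m K p))"
proof (rule hypergraph_sym_closure)
  fix vs assume "vs \<in> sorted_edges R \<phi> m K p"
  then have vs: "length vs = K" "\<forall>v\<in>set vs. length v = K + 2 + p" "\<forall>j<K. has_sort K j (vs ! j)"
    unfolding sorted_edges_def by auto
  have "set vs \<subseteq> sort_vertices K p"
  proof
    fix v assume "v \<in> set vs"
    then obtain j where "j < K" "v = vs ! j" using vs(1) by (metis in_set_conv_nth)
    then show "v \<in> sort_vertices K p" using vs \<open>v \<in> set vs\<close> by (auto simp: sort_vertices_def)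
  qed
  moreover have "distinct vs"
    unfolding distinct_conv_nth using vs(1,3) has_sort_unique by metis
  ultimately show "length vs = K \<and> set vs \<subseteq> sort_vertices K p \<and> distinct vs" using vs(1) by blast
qed

lemma blocks_in_sorted_edges_iff:
  fixes R :: "'r \<Rightarrow> 'a list \<Rightarrow> bool" and p :: nat
  assumes "m < K"
  defines "d \<equiv> K + 2 + p"
  shows "blocks d K zs \<in> sorted_edges R \<phi> m K p \<longleftrightarrow>
    (\<forall>j<K. has_sort K j (blocks d K zs ! j)) \<and>
    (\<forall>j<K. \<forall>t<p. zs ! (j * d + (K + 2 + t)) = zs ! (K + 2 + t)) \<and>
    sat R (map (\<lambda>i. zs ! (if i < m then i * d else K + 2 + (i - m))) [0..<m + p]) \<phi>"
proof -
  have tail: "blocks d K zs ! j ! (K + 2 + t) = zs ! (j * d + (K + 2 + t))" if "j < K" "t < p" for j t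
    using that by (simp add: d_def del: upt_Suc)
  have "blocks d K zs ! i ! 0 = zs ! (i * d)" if "i < m" for i
    using that assms(1) by (simp add: d_def del: upt_Suc)
  then have "map (\<lambda>i. blocks d K zs ! i ! 0) [0..<m] @ map (\<lambda>t. blocks d K zs ! 0 ! (K + 2 + t)) [0..<p]
      = map (\<lambda>i. zs ! (if i < m then i * d else K + 2 + (i - m))) [0..<m + p]"
    using tail[of 0] assms(1) by (auto simp: nth_append intro!: nth_equalityI)
  then show ?thesis
    unfolding sorted_edges_def d_def[symmetric] using tail assms(1)
    by (auto dest: length_in_blocks simp del: nth_blocks)
qed

lemma zero_definable_sorted_edges:
  fixes R :: "'r \<Rightarrow> 'a list \<Rightarrow> bool"
  assumes "m < K"
  shows "zero_definable R ((K + 2 + p) * K) (concat ` sym_closure (sorted_edges R \<phi> m K p))"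
proof (rule zero_definable_concat_image)
  show "length vs = K \<and> (\<forall>v\<in>set vs. length v = K + 2 + p)"
    if "vs \<in> sym_closure (sorted_edges R \<phi> m K p)" for vs
    by (rule mem_sym_closure_uniform[OF _ that]) (simp add: sorted_edges_def)
  define d where "d = K + 2 + p"
  have "zero_definable_pred R (d * K) (\<lambda>zs. (\<forall>j<K. has_sort K j (blocks d K zs ! j)) \<and>
      (\<forall>j<K. \<forall>t<p. zs ! (j * d + (K + 2 + t)) = zs ! (K + 2 + t)) \<and>
      sat R (map (\<lambda>i. zs ! (if i < m then i * d else K + 2 + (i - m))) [0..<m + p]) \<phi>)"
  proof (intro zero_definable_pred_conj zero_definable_pred_all_less)
    show "zero_definable_pred R (d * K) (\<lambda>zs. has_sort K j (blocks d K zs ! j))" if "j < K" for j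
      using that by (intro zero_definable_pred_block zero_definable_pred_has_sort) (simp_all add: d_def)
    show "zero_definable_pred R (d * K) (\<lambda>zs. zs ! (j * d + (K + 2 + t)) = zs ! (K + 2 + t))"
      if "j < K" "t < p" for j t
      using block_index_less[OF that(1), of "K + 2 + t" d] block_index_less[of 0 K "K + 2 + t" d] that
      by (intro zero_definable_pred_nth_eq) (auto simp: d_def)
    show "zero_definable_pred R (d * K)
        (\<lambda>zs. sat R (map (\<lambda>i. zs ! (if i < m then i * d else K + 2 + (i - m))) [0..<m + p]) \<phi>)"
      using assms block_index_less[of _ K 0 d] block_index_less[of 0 K _ d]
      by (intro zero_definable_pred_pull zero_definable_pred_sat) (auto simp: d_def)
  qed
  then have "zero_definable_pred R (d * K) (\<lambda>zs. blocks d K zs \<in> sorted_edges R \<phi> m K p)"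
    by (rule zero_definable_pred_cong) (simp only: blocks_in_sorted_edges_iff[OF assms, where p = p, folded d_def])
  then show "zero_definable_pred R ((K + 2 + p) * K)
      (\<lambda>zs. blocks (K + 2 + p) K zs \<in> sym_closure (sorted_edges R \<phi> m K p))"
    unfolding d_def by (rule zero_definable_pred_blocks_sym_closure)
qed

lemma zero_def_hypergraph_sorted_edges:
  "m < K \<Longrightarrow>
    zero_def_hypergraph R K (K + 2 + p) (sort_vertices K p) (sym_closure (sorted_edges R \<phi> m K p))"
  unfolding zero_def_hypergraph_def
  using hypergraph_sorted_edges zero_definable_sorted_edges zero_definable_sort_vertices
  by (auto simp: sort_vertices_def)

definition sort_vertex :: "'a \<Rightarrow> 'a \<Rightarrow> nat \<Rightarrow> 'a list \<Rightarrow> nat \<Rightarrow> 'a \<Rightarrow> 'a list" where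
  "sort_vertex u w K c i a = a # u # map (\<lambda>j. if j = i then w else u) [0..<K] @ c"

lemma length_sort_vertex: "length (sort_vertex u w K c i a) = K + 2 + length c"
  by (simp add: sort_vertex_def)

lemma has_sort_sort_vertex:
  assumes "u \<noteq> w" "i < K" "i' < K"
  shows "has_sort K i' (sort_vertex u w K c i a) \<longleftrightarrow> i' = i"
proof -
  have "sort_vertex u w K c i a ! (2 + j) \<noteq> sort_vertex u w K c i a ! 1 \<longleftrightarrow> j = i" if "j < K" for j
    using that assms(1) by (simp add: sort_vertex_def nth_append)
  then show ?thesis using assms(2,3) unfolding has_sort_def by metis
qed

lemma sort_vertex_in_sort_vertices:
  "u \<noteq> w \<Longrightarrow> i < K \<Longrightarrow> sort_vertex u w K c i a \<in> sort_vertices K (length c)"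
  using has_sort_sort_vertex[of u w i K i] by (auto simp: sort_vertices_def length_sort_vertex)

lemma sort_vertex_tuple_edge_iff:
  fixes c :: "'a list" and R :: "'r \<Rightarrow> 'a list \<Rightarrow> bool"
  assumes uw: "u \<noteq> w" and mK: "m < K" and as: "length as = m"
  defines "vs \<equiv> map (\<lambda>i. sort_vertex u w K c i (as ! (if i < m then i else 0))) [0..<K]"
  shows "vs \<in> sym_closure (sorted_edges R \<phi> m K (length c)) \<longleftrightarrow> sat R (as @ c) \<phi>"
proof -
  have sorted: "\<forall>j<K. has_sort K j (vs ! j)"
    using has_sort_sort_vertex[OF uw] by (simp add: vs_def)
  have "map (\<lambda>i. vs ! i ! 0) [0..<m] @ map (\<lambda>t. vs ! 0 ! (K + 2 + t)) [0..<length c] = as @ c"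
    using mK as by (auto simp: vs_def sort_vertex_def nth_append intro: nth_equalityI)
  then have edge: "vs \<in> sorted_edges R \<phi> m K (length c) \<longleftrightarrow> sat R (as @ c) \<phi>"
    using sorted by (auto simp: sorted_edges_def vs_def length_sort_vertex sort_vertex_def nth_append)
  have "ws = vs" if "ws \<in> sorted_edges R \<phi> m K (length c)" "mset ws = mset vs" for ws
  proof (rule sorted_tuple_unique[OF _ _ sorted])
    show "length vs = K" "length ws = K" "\<forall>j<K. has_sort K j (ws ! j)"
      using that(1) by (simp_all add: vs_def sorted_edges_def)
    show "set ws \<subseteq> set vs" using mset_eq_setD[OF that(2)] by simp
  qed
  then have "vs \<in> sym_closure (sorted_edges R \<phi> m K (length c)) \<longleftrightarrow> vs \<in> sorted_edges R \<phi> m K (length c)"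
    unfolding sym_closure_def by blast
  with edge show ?thesis by simp
qed

lemma map2_coordinate_functions:
  fixes g :: "nat \<Rightarrow> 'a \<Rightarrow> 'b list" and \<iota> :: "nat \<Rightarrow> nat"
  assumes "\<And>i a. i < K \<Longrightarrow> length (g i a) = d"
  defines "P \<equiv> concat (map (\<lambda>i. map (\<lambda>t. (\<lambda>a. g i a ! t, \<iota> i)) [0..<d]) [0..<K])"
  shows "map2 (\<lambda>h i. h (as ! i)) (map fst P) (map snd P) = concat (map (\<lambda>i. g i (as ! \<iota> i)) [0..<K])"
proof -
  have "map2 (\<lambda>h i. h (as ! i)) (map fst P) (map snd P)
      = concat (map (\<lambda>i. map (\<lambda>t. g i (as ! \<iota> i) ! t) [0..<d]) [0..<K])"
    unfolding zip_map_fst_snd by (simp add: P_def map_concat comp_def)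
  also have "\<dots> = concat (map (\<lambda>i. g i (as ! \<iota> i)) [0..<K])"
  proof -
    have "map (\<lambda>t. g i a ! t) [0..<d] = g i a" if "i < K" for i a
      using map_nth[of "g i a"] assms(1)[OF that] by simp
    then show ?thesis by (intro arg_cong[where f = concat] map_cong) auto
  qed
  finally show ?thesis .
qed

lemma pullback_of_definable_edge_preimage:
  fixes code :: "nat \<Rightarrow> 'a \<Rightarrow> 'v" and f :: "'v \<Rightarrow> 'b list" and RN :: "'s \<Rightarrow> 'b list \<Rightarrow> bool"
  assumes emb: "hg_embedding K f V E W F" and F: "def_hypergraph RN K d' W F"
    and code: "\<And>i a. i < K \<Longrightarrow> code i a \<in> V" and \<iota>: "\<And>i. i < K \<Longrightarrow> \<iota> i < m"
  shows "\<exists>fs idx. pullback_of_definable RN fs idx m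
    {as. length as = m \<and> map (\<lambda>i. code i (as ! \<iota> i)) [0..<K] \<in> E}"
proof -
  have hF: "hypergraph K W F" "W \<subseteq> {w. length w = d'}" "definable RN (d' * K) (concat ` F)"
    using F unfolding def_hypergraph_def by auto
  have F_uniform: "length ws = K \<and> (\<forall>w\<in>set ws. length w = d')" if "ws \<in> F" for ws
    using that hF(1,2) unfolding hypergraph_def by blast
  have f_len: "length (f (code i a)) = d'" if "i < K" for i a
    using emb hF(2) code[OF that] unfolding hg_embedding_def by auto
  define P where "P = concat (map (\<lambda>i. map (\<lambda>t. (\<lambda>a. f (code i a) ! t, \<iota> i)) [0..<d']) [0..<K])"
  have "map (\<lambda>i. code i (as ! \<iota> i)) [0..<K] \<in> E
      \<longleftrightarrow> map2 (\<lambda>g i. g (as ! i)) (map fst P) (map snd P) \<in> concat ` F" for as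
  proof -
    let ?vs = "map (\<lambda>i. code i (as ! \<iota> i)) [0..<K]"
    have "length ?vs = K" "set ?vs \<subseteq> V" using code by auto
    then have "?vs \<in> E \<longleftrightarrow> map f ?vs \<in> F"
      using emb unfolding hg_embedding_def by blast
    also have "\<dots> \<longleftrightarrow> concat (map f ?vs) \<in> concat ` F"
      using f_len by (intro concat_mem_concat_image_iff[OF F_uniform, symmetric]) auto
    finally show ?thesis
      using map2_coordinate_functions[where g = "\<lambda>i a. f (code i a)" and \<iota> = \<iota> and d = d'
          and K = K and as = as] f_len
      by (simp add: P_def comp_def)
  qed
  moreover have "length P = d' * K" unfolding P_def by (subst length_concat_uniform[of _ d']) auto
  moreover have "\<forall>i\<in>set (map snd P). i < m" using \<iota> by (auto simp: P_def)
  ultimately show ?thesis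
    unfolding pullback_of_definable_def using hF(3)
    by (intro exI[of _ "map fst P"] exI[of _ "map snd P"] conjI exI[of _ "concat ` F"]) auto
qed

lemma list_eq_if_length_zero_or_subsingleton:
  "m = 0 \<or> (\<forall>u w :: 'a. u = w) \<Longrightarrow> length as = m \<Longrightarrow> length bs = m \<Longrightarrow> (as :: 'a list) = bs"
  by (auto intro: nth_equalityI)

lemma pullback_of_definable_Nil:
  fixes X :: "'a list set" and RN :: "'s \<Rightarrow> 'b list \<Rightarrow> bool"
  assumes "\<And>as bs :: 'a list. length as = m \<Longrightarrow> length bs = m \<Longrightarrow> as = bs"
    and "X \<subseteq> {as. length as = m}"
  shows "pullback_of_definable RN [] [] m X"
proof -
  have "X = {as. length as = m \<and> X \<noteq> {}}"
  proof (intro set_eqI iffI)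
    fix as :: "'a list" assume "as \<in> {as. length as = m \<and> X \<noteq> {}}"
    then obtain bs where "bs \<in> X" "length as = m" by auto
    moreover from this have "as = bs" using assms by blast
    ultimately show "as \<in> X" by simp
  qed (use assms(2) in auto)
  then have "X = {as. length as = m \<and> map2 (\<lambda>f i. f (as ! i)) [] [] \<in> {xs. length xs = 0 \<and> X \<noteq> {}}}"
    by simp
  moreover have "definable RN 0 {xs. length xs = 0 \<and> X \<noteq> {}}"
    using zero_definable_pred_const[of RN 0 "X \<noteq> {}"]
    by (simp add: zero_definable_pred_iff_zero_definable zero_definable_imp_definable)
  ultimately show ?thesis
    unfolding pullback_of_definable_def
    by (intro conjI exI[of _ "{xs. length xs = 0 \<and> X \<noteq> {}}"]) simp_all
qed

lemma locally_trace_defines_if_embeds: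
  fixes RM :: "'r \<Rightarrow> 'a list \<Rightarrow> bool" and RN :: "'s \<Rightarrow> 'b list \<Rightarrow> bool"
  assumes embeds: "\<And>k d V E. 2 \<le> k \<Longrightarrow> zero_def_hypergraph RM k d V E \<Longrightarrow>
    \<exists>d' W F f. def_hypergraph RN k d' W F \<and> hg_embedding k f V E W F"
  shows "locally_trace_defines RN RM"
  unfolding locally_trace_defines_iff_pullback
proof (intro exI[of _ UNIV] allI impI)
  fix m X assume "definable RM m X"
  then obtain \<phi> c where X: "X = {as. length as = m \<and> sat RM (as @ c) \<phi>}"
    unfolding definable_def by blast
  have "\<exists>fs idx. pullback_of_definable RN fs idx m X"
  proof (cases "0 < m \<and> (\<exists>u w :: 'a. u \<noteq> w)")
    case False
    then have "m = 0 \<or> (\<forall>u w :: 'a. u = w)" by auto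
    then show ?thesis
      by (intro exI[of _ "[]"] pullback_of_definable_Nil list_eq_if_length_zero_or_subsingleton) (auto simp: X)
  next
    case True
    then obtain u w :: 'a where uw: "u \<noteq> w" and "0 < m" by blast
    \<comment> \<open>\<open>K \<ge> 2\<close>; the vertex of sort \<open>m\<close> only pads the edge and carries the dummy point \<open>as ! 0\<close>.\<close>
    define K where "K = Suc m"
    define \<iota> where "\<iota> i = (if i < m then i else 0)" for i
    have "zero_def_hypergraph RM K (K + 2 + length c) (sort_vertices K (length c))
        (sym_closure (sorted_edges RM \<phi> m K (length c)))"
      by (rule zero_def_hypergraph_sorted_edges) (simp add: K_def)
    moreover have "2 \<le> K" using \<open>0 < m\<close> by (simp add: K_def)
    ultimately obtain d' W F f where F: "def_hypergraph RN K d' W F"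
      and emb: "hg_embedding K f (sort_vertices K (length c))
        (sym_closure (sorted_edges RM \<phi> m K (length c))) W F"
      using embeds by blast
    have "X = {as. length as = m \<and> map (\<lambda>i. sort_vertex u w K c i (as ! \<iota> i)) [0..<K]
        \<in> sym_closure (sorted_edges RM \<phi> m K (length c))}"
      using sort_vertex_tuple_edge_iff[OF uw, of m K _ c RM \<phi>]
      by (auto simp: X K_def \<iota>_def)
    then show ?thesis
      using sort_vertex_in_sort_vertices[OF uw] \<open>0 < m\<close>
      by (simp only:) (rule pullback_of_definable_edge_preimage[OF emb F]; simp add: \<iota>_def)
  qed
  then show "\<exists>fs idx. set fs \<subseteq> UNIV \<and> pullback_of_definable RN fs idx m X" by blast
qed

theorem proposition2p10:
  fixes RM :: "'r \<Rightarrow> 'a list \<Rightarrow> bool" and RN :: "'s \<Rightarrow> 'b list \<Rightarrow> bool"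
  shows
   "(locally_trace_defines RN RM \<longleftrightarrow>
      (\<forall>k\<ge>2. \<forall>d V E. def_hypergraph RM k d V E \<longrightarrow>
         (\<exists>d' W F f. def_hypergraph RN k d' W F \<and> hg_embedding k f V E W F))) \<and>
    (locally_trace_defines RN RM \<longleftrightarrow>
      (\<forall>k\<ge>2. \<forall>d V E. zero_def_hypergraph RM k d V E \<longrightarrow>
         (\<exists>d' W F f. zero_def_hypergraph RN k d' W F \<and> hg_embedding k f V E W F)))"
proof (intro conjI iffI allI impI)
  fix k d V E
  assume "locally_trace_defines RN RM" "2 \<le> k" "def_hypergraph RM k d V E"
  then show "\<exists>d' W F f. def_hypergraph RN k d' W F \<and> hg_embedding k f V E W F"
    using zero_def_embedding_if_locally_trace_defines[of RN RM k d V E]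
    by (auto dest: zero_def_hypergraph_imp_def_hypergraph)
next
  fix k d V E
  assume "locally_trace_defines RN RM" "2 \<le> k" "zero_def_hypergraph RM k d V E"
  then show "\<exists>d' W F f. zero_def_hypergraph RN k d' W F \<and> hg_embedding k f V E W F"
    using zero_def_embedding_if_locally_trace_defines[of RN RM k d V E]
    by (auto dest: zero_def_hypergraph_imp_def_hypergraph)
next
  assume "\<forall>k\<ge>2. \<forall>d V E. def_hypergraph RM k d V E \<longrightarrow>
    (\<exists>d' W F f. def_hypergraph RN k d' W F \<and> hg_embedding k f V E W F)"
  then show "locally_trace_defines RN RM"
    by (intro locally_trace_defines_if_embeds) (blast dest: zero_def_hypergraph_imp_def_hypergraph)
next
  assume "\<forall>k\<ge>2. \<forall>d V E. zero_def_hypergraph RM k d V E \<longrightarrow>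
    (\<exists>d' W F f. zero_def_hypergraph RN k d' W F \<and> hg_embedding k f V E W F)"
  then show "locally_trace_defines RN RM"
    by (intro locally_trace_defines_if_embeds) (blast dest: zero_def_hypergraph_imp_def_hypergraph)
qed

end
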